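(* Let $0<f_1\le\dots\le f_n$ be opening costs depending on $n$, $\kappa=\max\{i\in[n]: f_i<1/(i-1)\}$ and $F_\kappa=\sum_{i=1}^\kappa f_i$. Suppose that $F_\kappa\in O(\ln(n))$ and set $m:=2n-1$. Then for sufficiently large $n$, $$F_\kappa+\int_{F_\kappa}^\infty\sqrt{1-\left(1-e^{-(x-F_\kappa)}\right)^{n-1}}\,\mathrm{d}x\le 2\sqrt{em}.$$
   Context: In the definition of $\kappa$, $1/(i-1)$ for $i=1$ is interpreted as $+\infty$. Asymptotic notation refers to $n\to\infty$. *)

theory Defs
  imports "HOL-Analysis.Analysis" "HOL-Library.Landau_Symbols"
begin

text \<open>Opening costs depending on n: f n i for i in {1..n}.
  kappa = max {i in [n] : f_i < 1/(i-1)}, where 1/(i-1) = +infinity for i = 1.\<close>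
definition kappa :: "(nat \<Rightarrow> nat \<Rightarrow> real) \<Rightarrow> nat \<Rightarrow> nat" where
  "kappa f n = Max {i \<in> {1..n}. i = 1 \<or> f n i < 1 / (real i - 1)}"

definition Fkappa :: "(nat \<Rightarrow> nat \<Rightarrow> real) \<Rightarrow> nat \<Rightarrow> real" where
  "Fkappa f n = (\<Sum>i = 1..kappa f n. f n i)"

end

theory Submission
  imports Defs "HOL-Real_Asymp.Real_Asymp"
begin

text \<open>By Bernoulli's inequality \<open>1 - (1 - t)^k \<le> k t\<close>, so with \<open>t = e^{-(x-F)}\<close> the integrand is
  at most \<open>\<surd>k e^{-(x-F)/2}\<close>, whose integral over \<open>[F, \<infinity>)\<close> is \<open>2\<surd>k\<close>. Since \<open>F = O(ln n) = o(\<surd>n)\<close>,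
  the left-hand side is eventually at most \<open>3\<surd>n \<le> 2\<surd>(e(2n-1))\<close>.\<close>

lemma one_minus_power_bounds:
  fixes t :: real and k :: nat
  assumes "0 \<le> t" "t \<le> 1"
  shows "0 \<le> 1 - (1 - t) ^ k" and "1 - (1 - t) ^ k \<le> real k * t"
proof -
  show "0 \<le> 1 - (1 - t) ^ k"
    using assms by (simp add: power_le_one)
  have "1 + real k * (- t) \<le> (1 + (- t)) ^ k"
    using assms by (intro Bernoulli_inequality) simp
  then show "1 - (1 - t) ^ k \<le> real k * t" by simp
qed

lemma sqrt_one_minus_power_exp_le:
  fixes F x :: real and k :: nat
  assumes "F \<le> x"
  shows "sqrt (1 - (1 - exp (-(x - F))) ^ k) \<le> sqrt (real k) * exp (-(x - F) / 2)"
proof -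
  have "sqrt (1 - (1 - exp (-(x - F))) ^ k) \<le> sqrt (real k * exp (-(x - F)))"
    using one_minus_power_bounds(2)[of "exp (-(x - F))" k] assms by simp
  also have "\<dots> = sqrt (real k) * sqrt (exp (-(x - F) / 2) ^ 2)"
    by (simp add: real_sqrt_mult exp_double[symmetric])
  finally show ?thesis by simp
qed

lemma exp_half_decay_has_integral:
  fixes F :: real
  shows "((\<lambda>x. exp (-(x - F) / 2)) has_integral 2) {F..}"
proof -
  have "((\<lambda>x. exp (-(1/2) * x)) has_integral exp (-(1/2) * F) / (1/2)) {F..}"
    by (rule has_integral_exp_minus_to_infinity) simp
  then have "((\<lambda>x. exp (F / 2) * exp (-(1/2) * x)) has_integral
      exp (F / 2) * (exp (-(1/2) * F) / (1/2))) {F..}"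
    by (rule has_integral_mult_right)
  moreover have "exp (F / 2) * exp (-(1/2) * x) = exp (-(x - F) / 2)" for x
    by (simp add: exp_add[symmetric] field_simps)
  moreover have "exp (F / 2) * (exp (-(1/2) * F) / (1/2)) = 2"
    by (simp add: exp_minus field_simps)
  ultimately show ?thesis by (simp only:)
qed

lemma sqrt_one_minus_power_exp_integral_le:
  fixes F :: real and k :: nat
  defines "g \<equiv> \<lambda>x. sqrt (1 - (1 - exp (-(x - F))) ^ k)"
  shows "g integrable_on {F..}" and "integral {F..} g \<le> 2 * sqrt (real k)"
proof -
  define h where "h x = sqrt (real k) * exp (-(x - F) / 2)" for x
  have h: "(h has_integral 2 * sqrt (real k)) {F..}"
    unfolding h_def using has_integral_mult_right[OF exp_half_decay_has_integral]
    by (simp add: mult.commute)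
  have g_le_h: "\<bar>g x\<bar> \<le> h x" if "x \<in> {F..}" for x
    using that sqrt_one_minus_power_exp_le[of F x k] one_minus_power_bounds(1)[of "exp (-(x - F))" k]
    unfolding g_def h_def by simp
  show g: "g integrable_on {F..}"
  proof (rule measurable_bounded_by_integrable_imp_integrable_real)
    show "g \<in> borel_measurable (lebesgue_on {F..})"
      unfolding g_def by (intro continuous_imp_measurable_on_sets_lebesgue continuous_intros) auto
  qed (use h g_le_h in auto)
  have "integral {F..} g \<le> integral {F..} h"
    using g h g_le_h by (intro integral_le) (auto dest: abs_le_D1)
  also have "\<dots> = 2 * sqrt (real k)"
    using h by blast
  finally show "integral {F..} g \<le> 2 * sqrt (real k)" .
qed

lemma eventually_le_sqrt_if_bigo_ln:
  fixes g :: "nat \<Rightarrow> real"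
  assumes "g \<in> O(\<lambda>n. ln (real n))"
  shows "\<forall>\<^sub>F n in at_top. g n \<le> sqrt (real n)"
proof -
  have "(\<lambda>n. ln (real n)) \<in> o(\<lambda>n. sqrt (real n))" by real_asymp
  with assms have "g \<in> o(\<lambda>n. sqrt (real n))"
    by (rule landau_o.big_small_trans)
  then have "\<forall>\<^sub>F n in at_top. norm (g n) \<le> 1 * norm (sqrt (real n))"
    by (rule landau_o.smallD) simp
  then show ?thesis
    by eventually_elim simp
qed

lemma three_sqrt_le_two_sqrt_exp:
  fixes n :: nat
  assumes "2 \<le> n"
  shows "3 * sqrt (real n) \<le> 2 * sqrt (exp 1 * real (2 * n - 1))"
proof -
  have "2 \<le> exp (1::real)"
    using exp_ge_add_one_self[of 1] by simp
  then have "2 * (2 * real n - 1) \<le> exp 1 * (2 * real n - 1)"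
    using assms by (intro mult_right_mono) auto
  then have "9 * real n \<le> 4 * (exp 1 * real (2 * n - 1))"
    using assms by (simp add: of_nat_diff)
  then have "sqrt (9 * real n) \<le> sqrt (4 * (exp 1 * real (2 * n - 1)))"
    by (rule real_sqrt_le_mono)
  then show ?thesis
    by (simp add: real_sqrt_mult)
qed

theorem lemma11:
  fixes f :: "nat \<Rightarrow> nat \<Rightarrow> real"
  assumes pos: "\<And>n i. 1 \<le> i \<Longrightarrow> i \<le> n \<Longrightarrow> 0 < f n i"
    and mono: "\<And>n i j. 1 \<le> i \<Longrightarrow> i \<le> j \<Longrightarrow> j \<le> n \<Longrightarrow> f n i \<le> f n j"
    and bigO: "(\<lambda>n. Fkappa f n) \<in> O(\<lambda>n. ln (real n))"
  shows "\<forall>\<^sub>F n in at_top.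
    (\<lambda>x. sqrt (1 - (1 - exp (-(x - Fkappa f n))) ^ (n - 1))) integrable_on {Fkappa f n..} \<and>
    Fkappa f n + integral {Fkappa f n..} (\<lambda>x. sqrt (1 - (1 - exp (-(x - Fkappa f n))) ^ (n - 1)))
      \<le> 2 * sqrt (exp 1 * real (2 * n - 1))"
  using eventually_le_sqrt_if_bigo_ln[OF bigO] eventually_ge_at_top[of "2::nat"]
proof eventually_elim
  case (elim n)
  note integral = sqrt_one_minus_power_exp_integral_le[of "Fkappa f n" "n - 1"]
  have "sqrt (real (n - 1)) \<le> sqrt (real n)"
    by simp
  with elim integral(2) three_sqrt_le_two_sqrt_exp[of n] integral(1) show ?case
    by linarith
qed

end
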